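(* Let $f_1,f_2:\mathbb R^d\to\mathbb R$ be convex with $\nabla f_i$ globally Lipschitz continuous with modulus $L_i>0$ ($i=1,2$), let $f_3:\mathbb R^d\to\mathbb R\cup\{+\infty\}$ be proper and lower semicontinuous, and assume $\varphi:=f_1+f_2+f_3$ has a nonempty set of minimizers. Let $\lambda\in(0,2)$, $\underline\alpha:=\frac{2\lambda-3+\sqrt{9-4\lambda}}{2}$, $\alpha\in(\underline\alpha,1)$, and let $\gamma\in\Gamma$ with $\gamma\le\min\{\frac{\alpha}{L_1},\frac{1-\alpha}{L_2}\}$. Let $((x_1^k,x_2^k,x_3^k),(z_1^k,z_2^k))_k$ be any sequence generated by the relaxed Ryu splitting method. Then: (i) $x_i^{k+1}-x_i^k\to0$ for $i=1,2,3$, and $z_i^{k+1}-z_i^k\to0$ and $x_3^k-x_i^k\to0$ for $i=1,2$. If, in addition, $((x_1^k,x_2^k,x_3^k),(z_1^k,z_2^k))_k$ is bounded, then: (ii) for any cluster point $x^*$ of $(x_3^k)_k$, $\varphi_\gamma^{\mathrm{Ryu}}(z_1^k,z_2^k)\to\varphi(x^* )$ and $f_1(x_1^k)+f_2(x_2^k)+f_3(x_3^k)\to\varphi(x^* )$; (iii) the sets of cluster points of $(x_1^k)_k$, $(x_2^k)_k$, $(x_3^k)_k$ coincide, and every such cluster point $x^*$ is a critical point of $\varphi$, i.e. $0\in\nabla f_1(x^* )+\nabla f_2(x^* )+\partial f_3(x^* )$.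
   Context: For $h:\mathbb R^d\to\mathbb R\cup\{+\infty\}$ and $\gamma>0$, $\mathrm{prox}_{\gamma h}(z):=\operatorname{argmin}_{y}\{h(y)+\frac{1}{2\gamma}\|y-z\|^2\}$; $\partial f_3$ is the limiting subdifferential. The relaxed Ryu splitting method: given $z_1^0,z_2^0\in\mathbb R^d$, for $k\ge0$, $x_1^k=\mathrm{prox}_{\gamma f_1}(z_1^k)$, $x_2^k=\mathrm{prox}_{\frac{\gamma}{\alpha}f_2}(\frac{z_2^k}{\alpha}+x_1^k)$, $x_3^k\in\mathrm{prox}_{\gamma f_3}(x_1^k-z_1^k+x_2^k-z_2^k)$, $z_1^{k+1}=z_1^k+\lambda(x_3^k-x_1^k)$, $z_2^{k+1}=z_2^k+\lambda(x_3^k-x_2^k)$. Relaxed Ryu envelope: with $\gamma_1=\gamma/\alpha$, $\gamma_2=\gamma/(1-\alpha)$, and for $(z_1,z_2)$, $x_1=\mathrm{prox}_{\gamma f_1}(z_1)$, $x_2=\mathrm{prox}_{\frac{\gamma}{\alpha}f_2}(\frac{z_2}{\alpha}+x_1)$, $\varphi_\gamma^{\mathrm{Ryu}}(z_1,z_2):=\min_{y}\{f_3(y)+\sum_{i=1}^2[f_i(x_i)+\langle y-x_i,\nabla f_i(x_i)\rangle+\frac{1}{2\gamma_i}\|y-x_i\|^2]\}$. Stepsize set: fix $\epsilon_1\in\big(\frac{\alpha}{2\alpha-\lambda},\frac{2-\lambda}{1-\alpha}\big)$ and $\epsilon_2\in\big(\frac{\alpha L_2}{\lambda},+\infty\big)$,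 and set $\bar\gamma_0:=\frac{\lambda}{2L_1}$, $\bar\gamma_1:=\frac{\lambda}{2L_2}-\frac{\alpha}{2\epsilon_2}$, $\bar\gamma_2:=\frac{\alpha(2-\lambda-(1-\alpha)\epsilon_1)}{\alpha\epsilon_2+2(1-\alpha)L_1}$, $\bar\gamma_3:=\frac{(1-\alpha)(\epsilon_1(2\alpha-\lambda)-\alpha)}{2\alpha L_2\epsilon_1}$, and $\Gamma:=(0,\min\{\bar\gamma_0,\bar\gamma_1\}]\cap\big(0,\min\{\bar\gamma_2,\bar\gamma_3,\frac{1}{L_1+L_2}\}\big)$. *)

theory Defs
  imports "HOL-Analysis.Analysis"
begin

definition prox_set :: "('a::euclidean_space \<Rightarrow> ereal) \<Rightarrow> real \<Rightarrow> 'a \<Rightarrow> 'a set" where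
  "prox_set h \<gamma> z = {y. \<forall>w. h y + ereal ((norm (y - z))\<^sup>2 / (2 * \<gamma>))
                           \<le> h w + ereal ((norm (w - z))\<^sup>2 / (2 * \<gamma>))}"

(* single-valued prox point (used where prox is unique, e.g. convex smooth f) *)
definition prox_pt :: "('a::euclidean_space \<Rightarrow> ereal) \<Rightarrow> real \<Rightarrow> 'a \<Rightarrow> 'a" where
  "prox_pt h \<gamma> z = (SOME y. y \<in> prox_set h \<gamma> z)"

definition proper_fun :: "('a \<Rightarrow> ereal) \<Rightarrow> bool" where
  "proper_fun f \<longleftrightarrow> (\<forall>x. f x \<noteq> -\<infinity>) \<and> (\<exists>x. f x \<noteq> \<infinity>)"

definition lsc_fun :: "('a::topological_space \<Rightarrow> ereal) \<Rightarrow> bool" where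
  "lsc_fun f \<longleftrightarrow> (\<forall>x. f x \<le> Liminf (at x) f)"

definition frechet_subdiff :: "('a::euclidean_space \<Rightarrow> ereal) \<Rightarrow> 'a \<Rightarrow> 'a set" where
  "frechet_subdiff f x = {v. \<bar>f x\<bar> \<noteq> \<infinity> \<and>
     0 \<le> Liminf (at x) (\<lambda>y. (f y - f x - ereal (v \<bullet> (y - x))) * ereal (1 / norm (y - x)))}"

definition limiting_subdiff :: "('a::euclidean_space \<Rightarrow> ereal) \<Rightarrow> 'a \<Rightarrow> 'a set" where
  "limiting_subdiff f x = {v. \<exists>xs vs. xs \<longlonglongrightarrow> x \<and> (\<lambda>k. f (xs k)) \<longlonglongrightarrow> f x
       \<and> vs \<longlonglongrightarrow> v \<and> (\<forall>k. vs k \<in> frechet_subdiff f (xs k))}"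

definition cluster_pts :: "(nat \<Rightarrow> 'a::topological_space) \<Rightarrow> 'a set" where
  "cluster_pts s = {p. \<exists>r. strict_mono r \<and> (s \<circ> r) \<longlonglongrightarrow> p}"

definition ryu_env ::
  "('a::euclidean_space \<Rightarrow> real) \<Rightarrow> ('a \<Rightarrow> 'a) \<Rightarrow> ('a \<Rightarrow> real) \<Rightarrow> ('a \<Rightarrow> 'a)
   \<Rightarrow> ('a \<Rightarrow> ereal) \<Rightarrow> real \<Rightarrow> real \<Rightarrow> 'a \<Rightarrow> 'a \<Rightarrow> ereal" where
  "ryu_env f1 g1 f2 g2 f3 \<gamma> \<alpha> z1 z2 =
    (let \<gamma>1 = \<gamma> / \<alpha>; \<gamma>2 = \<gamma> / (1 - \<alpha>);
         x1 = prox_pt (\<lambda>x. ereal (f1 x)) \<gamma> z1;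
         x2 = prox_pt (\<lambda>x. ereal (f2 x)) (\<gamma> / \<alpha>) (z2 /\<^sub>R \<alpha> + x1)
     in INF y. f3 y + ereal (f1 x1 + (y - x1) \<bullet> g1 x1 + (norm (y - x1))\<^sup>2 / (2 * \<gamma>1)
                            + f2 x2 + (y - x2) \<bullet> g2 x2 + (norm (y - x2))\<^sup>2 / (2 * \<gamma>2)))"

definition stepsize_set :: "real \<Rightarrow> real \<Rightarrow> real \<Rightarrow> real \<Rightarrow> real \<Rightarrow> real \<Rightarrow> real set" where
  "stepsize_set L1 L2 \<alpha> lam \<epsilon>1 \<epsilon>2 =
    (let g0 = lam / (2 * L1);
         g1 = lam / (2 * L2) - \<alpha> / (2 * \<epsilon>2);
         g2 = \<alpha> * (2 - lam - (1 - \<alpha>) * \<epsilon>1) / (\<alpha> * \<epsilon>2 + 2 * (1 - \<alpha>) * L1);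
         g3 = (1 - \<alpha>) * (\<epsilon>1 * (2 * \<alpha> - lam) - \<alpha>) / (2 * \<alpha> * L2 * \<epsilon>1)
     in {\<gamma>. 0 < \<gamma> \<and> \<gamma> \<le> min g0 g1 \<and> \<gamma> < min (min g2 g3) (1 / (L1 + L2))})"

end

theory Submission
  imports Defs
begin

(* The Ryu envelope along the iterates, env k = f3 (x3 k) + M_k (x3 k), where M_k is the sum of
   the quadratic upper models of f1 and f2 around x1 k and x2 k, is a Lyapunov function. The prox
   steps of f1 and f2 are explicit gradient relations (z1 = x1 + gamma grad f1 (x1), and similarly
   for z2), so the z-updates relate consecutive x-steps to gradient differences. Evaluating M_(k+1)
   at x3 k and using co-coercivity of the gradients, Young's inequality and the stepsize conditions
   gives the sufficient decrease
     kappa1 |x1 (k+1) - x1 k|^2 + kappa2 |x2 (k+1) - x2 k|^2 <= 2 lam gamma (env k - env (k+1))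
   with kappa1, kappa2 > 0. As env is bounded below by inf (f1 + f2 + f3), the squared steps are
   summable, and (i) follows from the z-updates. Along a subsequence x3 (r j) -> x*, the prox
   inequality of f3 tested at x* together with lower semicontinuity gives f3 (x3 (r j)) -> f3 x*,
   which identifies the limit of the monotone sequence env as phi x*. Finally the prox residuals
   (u - x3) / gamma are Frechet subgradients of f3 at x3 converging to -(grad f1 + grad f2) x*. *)

section \<open>Smooth convex functions\<close>

lemma has_real_derivative_along_line:
  fixes f :: "'a::real_inner \<Rightarrow> real"
  assumes "\<And>x. (f has_derivative (\<lambda>h. g x \<bullet> h)) (at x)"
  shows "((\<lambda>t. f (x + t *\<^sub>R d)) has_real_derivative (g (x + t *\<^sub>R d) \<bullet> d)) (at t)"
proof -
  have "((\<lambda>r. x + r *\<^sub>R d) has_derivative (\<lambda>r. r *\<^sub>R d)) (at t)"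
    by (intro derivative_eq_intros) auto
  then have "((\<lambda>r. f (x + r *\<^sub>R d)) has_derivative (\<lambda>r. g (x + t *\<^sub>R d) \<bullet> (r *\<^sub>R d))) (at t)"
    by (rule has_derivative_compose) (simp add: assms)
  then show ?thesis
    by (simp add: has_field_derivative_def mult_commute_abs)
qed

lemma lipschitz_inner_diff_le:
  fixes g :: "'a::real_inner \<Rightarrow> 'a"
  assumes "L-lipschitz_on UNIV g"
  shows "(x - y) \<bullet> (g x - g y) \<le> L * (norm (x - y))\<^sup>2"
proof -
  have "(x - y) \<bullet> (g x - g y) \<le> norm (x - y) * norm (g x - g y)"
    by (rule norm_cauchy_schwarz)
  also have "\<dots> \<le> norm (x - y) * (L * norm (x - y))"
    using lipschitz_on_normD[OF assms] by (intro mult_left_mono) auto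
  finally show ?thesis
    by (simp add: power2_eq_square algebra_simps)
qed

lemma lipschitz_gradient_quadratic_upper_bound:
  fixes f :: "'a::real_inner \<Rightarrow> real"
  assumes grad: "\<And>x. (f has_derivative (\<lambda>h. g x \<bullet> h)) (at x)" and lip: "L-lipschitz_on UNIV g"
  shows "f y \<le> f x + g x \<bullet> (y - x) + L / 2 * (norm (y - x))\<^sup>2"
proof -
  define d where "d = y - x"
  define h where "h t = f (x + t *\<^sub>R d) - t * (g x \<bullet> d) - L / 2 * t\<^sup>2 * (norm d)\<^sup>2" for t
  have "h 1 \<le> h 0"
  proof (rule DERIV_nonpos_imp_nonincreasing[of 0 1 h])
    fix t :: real
    assume t: "0 \<le> t" "t \<le> 1"
    have "(h has_real_derivative (g (x + t *\<^sub>R d) - g x) \<bullet> d - L * t * (norm d)\<^sup>2) (at t)"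
      unfolding h_def
      by (rule derivative_eq_intros has_real_derivative_along_line[OF grad] | simp)+
         (simp add: inner_diff_left)
    moreover have "(g (x + t *\<^sub>R d) - g x) \<bullet> d \<le> L * t * (norm d)\<^sup>2"
    proof -
      have "(g (x + t *\<^sub>R d) - g x) \<bullet> d \<le> norm (g (x + t *\<^sub>R d) - g x) * norm d"
        by (rule norm_cauchy_schwarz)
      also have "\<dots> \<le> L * norm (t *\<^sub>R d) * norm d"
        using lipschitz_on_normD[OF lip, of "x + t *\<^sub>R d" x] by (intro mult_right_mono) auto
      finally show ?thesis
        using t by (simp add: power2_eq_square)
    qed
    ultimately show "\<exists>y. (h has_real_derivative y) (at t) \<and> y \<le> 0"
      by auto
  qed simp
  then show ?thesis
    by (simp add: h_def d_def inner_commute)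
qed

lemma convex_gradient_inequality:
  fixes f :: "'a::real_inner \<Rightarrow> real"
  assumes cvx: "convex_on UNIV f" and grad: "\<And>x. (f has_derivative (\<lambda>h. g x \<bullet> h)) (at x)"
  shows "f x + g x \<bullet> (y - x) \<le> f y"
proof -
  define h where "h = (\<lambda>t. f (x + t *\<^sub>R (y - x)))"
  have "convex_on UNIV h"
  proof (rule convex_onI)
    fix u s t :: real
    assume "0 < u" "u < 1"
    moreover have "x + ((1 - u) * s + u * t) *\<^sub>R (y - x)
        = (1 - u) *\<^sub>R (x + s *\<^sub>R (y - x)) + u *\<^sub>R (x + t *\<^sub>R (y - x))"
      by (simp add: algebra_simps)
    ultimately show "h ((1 - u) *\<^sub>R s + u *\<^sub>R t) \<le> (1 - u) * h s + u * h t"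
      unfolding h_def using convex_onD[OF cvx, of u] by simp
  qed simp
  moreover have "(h has_real_derivative g x \<bullet> (y - x)) (at 0)"
    unfolding h_def using has_real_derivative_along_line[OF grad, of x "y - x" 0] by simp
  ultimately have "g x \<bullet> (y - x) \<le> h 1 - h 0"
    using convex_on_imp_above_tangent[of UNIV h 0 1] by simp
  then show ?thesis
    by (simp add: h_def)
qed

lemma convex_gradient_monotone:
  fixes f :: "'a::real_inner \<Rightarrow> real"
  assumes "convex_on UNIV f" and "\<And>x. (f has_derivative (\<lambda>h. g x \<bullet> h)) (at x)"
  shows "0 \<le> (x - y) \<bullet> (g x - g y)"
  using convex_gradient_inequality[OF assms, of x y] convex_gradient_inequality[OF assms, of y x]
  by (simp add: inner_diff_left inner_diff_right inner_commute)

lemma convex_gradient_inner_le: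
  fixes f :: "'a::real_inner \<Rightarrow> real"
  assumes "convex_on UNIV f" and "\<And>x. (f has_derivative (\<lambda>h. g x \<bullet> h)) (at x)"
    and "L-lipschitz_on UNIV g" and "c \<le> a" and "0 \<le> a"
  shows "c * ((x - y) \<bullet> (g x - g y)) \<le> a * L * (norm (x - y))\<^sup>2"
proof -
  have "c * ((x - y) \<bullet> (g x - g y)) \<le> a * ((x - y) \<bullet> (g x - g y))"
    using assms(4) convex_gradient_monotone[OF assms(1,2)] by (rule mult_right_mono)
  also have "\<dots> \<le> a * (L * (norm (x - y))\<^sup>2)"
    using lipschitz_inner_diff_le[OF assms(3)] assms(5) by (rule mult_left_mono)
  finally show ?thesis
    by (simp add: mult.assoc)
qed

text \<open>Apply the quadratic upper bound to the convex function \<open>f - \<langle>g y, -\<rangle>\<close>, which is minimal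
  at \<open>y\<close>, at the gradient step \<open>x - (g x - g y) / L\<close>.\<close>
lemma convex_lipschitz_gradient_lower_bound:
  fixes f :: "'a::real_inner \<Rightarrow> real"
  assumes cvx: "convex_on UNIV f" and grad: "\<And>x. (f has_derivative (\<lambda>h. g x \<bullet> h)) (at x)"
    and lip: "L-lipschitz_on UNIV g" and L: "0 < L"
  shows "f y + g y \<bullet> (x - y) + (norm (g x - g y))\<^sup>2 / (2 * L) \<le> f x"
proof -
  define \<phi> where "\<phi> w = f w - g y \<bullet> w" for w
  define G where "G = g x - g y"
  have grad_\<phi>: "(\<phi> has_derivative (\<lambda>h. (g w - g y) \<bullet> h)) (at w)" for w
    unfolding \<phi>_def
    by (rule has_derivative_eq_rhs, (rule derivative_eq_intros grad)+)
       (auto simp: inner_diff_left fun_eq_iff)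
  have lip_\<phi>: "L-lipschitz_on UNIV (\<lambda>w. g w - g y)"
    using lip by (auto simp: lipschitz_on_def dist_norm)
  have "\<phi> y \<le> \<phi> (x - (1 / L) *\<^sub>R G)"
    using convex_gradient_inequality[OF cvx grad, of y "x - (1 / L) *\<^sub>R G"]
    by (simp only: \<phi>_def inner_diff_right)
  also have "\<dots> \<le> \<phi> x + G \<bullet> (- (1 / L) *\<^sub>R G) + L / 2 * (norm ((1 / L) *\<^sub>R G))\<^sup>2"
    using lipschitz_gradient_quadratic_upper_bound[OF grad_\<phi> lip_\<phi>, of "x - (1 / L) *\<^sub>R G" x]
    by (simp add: G_def)
  also have "\<dots> = \<phi> x - (norm G)\<^sup>2 / (2 * L)"
    using L by (simp add: power2_norm_eq_inner[symmetric] power_divide field_simps power2_eq_square)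
  finally show ?thesis
    by (simp add: \<phi>_def G_def inner_diff_right)
qed

lemma inner_le_young:
  fixes a b :: "'a::real_inner"
  assumes "0 < \<epsilon>"
  shows "2 * (a \<bullet> b) \<le> \<epsilon> * (norm a)\<^sup>2 + (norm b)\<^sup>2 / \<epsilon>"
proof -
  have "(norm (\<epsilon> *\<^sub>R a - b))\<^sup>2 = \<epsilon> * (\<epsilon> * (norm a)\<^sup>2 + (norm b)\<^sup>2 / \<epsilon>) - \<epsilon> * (2 * (a \<bullet> b))"
    unfolding power2_norm_eq_inner using assms
    by (simp add: inner_diff_left inner_diff_right inner_commute algebra_simps)
  then have "\<epsilon> * (2 * (a \<bullet> b)) \<le> \<epsilon> * (\<epsilon> * (norm a)\<^sup>2 + (norm b)\<^sup>2 / \<epsilon>)"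
    using zero_le_power2[of "norm (\<epsilon> *\<^sub>R a - b)"] by linarith
  then show ?thesis
    using assms by simp
qed

section \<open>Quadratic upper models\<close>

definition quad_model :: "('a::real_inner \<Rightarrow> real) \<Rightarrow> ('a \<Rightarrow> 'a) \<Rightarrow> real \<Rightarrow> 'a \<Rightarrow> 'a \<Rightarrow> real" where
  "quad_model f g t x y = f x + (y - x) \<bullet> g x + (norm (y - x))\<^sup>2 / (2 * t)"

lemma quad_model_upper_bound:
  fixes f :: "'a::real_inner \<Rightarrow> real"
  assumes "\<And>x. (f has_derivative (\<lambda>h. g x \<bullet> h)) (at x)" and "L-lipschitz_on UNIV g"
    and "0 < t" and "L * t \<le> 1"
  shows "f y \<le> quad_model f g t x y"
proof -
  have "L / 2 * (norm (y - x))\<^sup>2 \<le> (norm (y - x))\<^sup>2 / (2 * t)"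
    using assms(3) mult_right_mono[OF assms(4), of "(norm (y - x))\<^sup>2"] by (simp add: field_simps)
  then show ?thesis
    using lipschitz_gradient_quadratic_upper_bound[OF assms(1,2), of y x]
    by (simp add: quad_model_def inner_commute)
qed

lemma quad_model_change:
  fixes f :: "'a::real_inner \<Rightarrow> real"
  assumes "convex_on UNIV f" and "\<And>x. (f has_derivative (\<lambda>h. g x \<bullet> h)) (at x)"
    and "L-lipschitz_on UNIV g" and "0 < L"
  shows "quad_model f g t x' y - quad_model f g t x y
    \<le> (y - x) \<bullet> (g x' - g x) - (norm (g x' - g x))\<^sup>2 / (2 * L)
       + ((norm (x' - x))\<^sup>2 - 2 * ((y - x) \<bullet> (x' - x))) / (2 * t)"
proof -
  have "f x' + g x' \<bullet> (x - x') + (norm (g x - g x'))\<^sup>2 / (2 * L) \<le> f x"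
    by (rule convex_lipschitz_gradient_lower_bound[OF assms])
  moreover have "(norm (y - x'))\<^sup>2 = (norm (y - x))\<^sup>2 - 2 * ((y - x) \<bullet> (x' - x)) + (norm (x' - x))\<^sup>2"
    by (simp add: power2_norm_eq_inner inner_diff_left inner_diff_right inner_commute)
  ultimately show ?thesis
    by (simp add: quad_model_def norm_minus_commute inner_diff_left inner_diff_right inner_commute
        diff_divide_distrib add_divide_distrib)
qed

lemma quad_model_change_scaled:
  fixes f :: "'a::real_inner \<Rightarrow> real"
  assumes "convex_on UNIV f" and "\<And>x. (f has_derivative (\<lambda>h. g x \<bullet> h)) (at x)"
    and "L-lipschitz_on UNIV g" and "0 < L" and "0 \<le> lam" and "0 < \<gamma>" and "0 < \<beta>"
  shows "2 * lam * \<gamma> * (quad_model f g (\<gamma> / \<beta>) x' y - quad_model f g (\<gamma> / \<beta>) x y)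
    \<le> 2 * \<gamma> * (lam * ((y - x) \<bullet> (g x' - g x))) - \<gamma> * lam / L * (norm (g x' - g x))\<^sup>2
       + \<beta> * (lam * (norm (x' - x))\<^sup>2 - 2 * (lam * ((y - x) \<bullet> (x' - x))))"
proof -
  have "2 * lam * \<gamma> * (quad_model f g (\<gamma> / \<beta>) x' y - quad_model f g (\<gamma> / \<beta>) x y)
      \<le> 2 * lam * \<gamma> * ((y - x) \<bullet> (g x' - g x) - (norm (g x' - g x))\<^sup>2 / (2 * L)
        + ((norm (x' - x))\<^sup>2 - 2 * ((y - x) \<bullet> (x' - x))) / (2 * (\<gamma> / \<beta>)))"
    using quad_model_change[OF assms(1-4), of "\<gamma> / \<beta>" x' y x] assms(5,6)
    by (intro mult_left_mono) auto
  also have "\<dots> = 2 * \<gamma> * (lam * ((y - x) \<bullet> (g x' - g x))) - \<gamma> * lam / L * (norm (g x' - g x))\<^sup>2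
       + \<beta> * (lam * (norm (x' - x))\<^sup>2 - 2 * (lam * ((y - x) \<bullet> (x' - x))))"
    using assms(4,6,7) by (simp add: field_simps)
  finally show ?thesis .
qed

text \<open>The step hypotheses below are the two \<open>z\<close>-updates of the method, rewritten with the
  optimality condition \<open>z = x + \<gamma> \<nabla>f(x)\<close> of the prox steps of \<open>f1\<close> and \<open>f2\<close>.\<close>

lemma quad_model_change_first:
  fixes f :: "'a::real_inner \<Rightarrow> real"
  assumes cvx: "convex_on UNIV f" and grad: "\<And>x. (f has_derivative (\<lambda>h. g x \<bullet> h)) (at x)"
    and lip: "L-lipschitz_on UNIV g" and L: "0 < L"
    and lam: "0 < lam" and \<gamma>: "0 < \<gamma>" "\<gamma> \<le> lam / (2 * L)" and \<alpha>: "0 < \<alpha>" "\<alpha> < 1"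
    and step: "lam *\<^sub>R (y - x) = (x' - x) + \<gamma> *\<^sub>R (g x' - g x)"
  shows "2 * lam * \<gamma> * (quad_model f g (\<gamma> / \<alpha>) x' y - quad_model f g (\<gamma> / \<alpha>) x y)
    \<le> (2 * (1 - \<alpha>) * \<gamma> * L - \<alpha> * (2 - lam)) * (norm (x' - x))\<^sup>2"
proof -
  define s where "s = y - x"
  define d where "d = x' - x"
  define G where "G = g x' - g x"
  have step': "lam *\<^sub>R s = d + \<gamma> *\<^sub>R G"
    using step by (simp add: s_def d_def G_def)
  have sG: "lam * (s \<bullet> G) = d \<bullet> G + \<gamma> * (norm G)\<^sup>2"
    using arg_cong[OF step', of "\<lambda>v. v \<bullet> G"] by (simp add: inner_add_left power2_norm_eq_inner)
  have sd: "lam * (s \<bullet> d) = (norm d)\<^sup>2 + \<gamma> * (d \<bullet> G)"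
    using arg_cong[OF step', of "\<lambda>v. v \<bullet> d"]
    by (simp add: inner_add_left inner_add_right power2_norm_eq_inner inner_commute)
  have "2 * lam * \<gamma> * (quad_model f g (\<gamma> / \<alpha>) x' y - quad_model f g (\<gamma> / \<alpha>) x y)
      \<le> 2 * \<gamma> * (lam * (s \<bullet> G)) - \<gamma> * lam / L * (norm G)\<^sup>2
        + \<alpha> * (lam * (norm d)\<^sup>2 - 2 * (lam * (s \<bullet> d)))"
    using quad_model_change_scaled[OF cvx grad lip L _ \<gamma>(1) \<alpha>(1), of lam x' y x] lam
    by (simp add: s_def d_def G_def)
  also have "\<dots> = 2 * \<gamma> * (1 - \<alpha>) * (d \<bullet> G) + \<gamma> * (2 * \<gamma> - lam / L) * (norm G)\<^sup>2
      - \<alpha> * (2 - lam) * (norm d)\<^sup>2"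
    unfolding sG sd by (simp add: algebra_simps)
  also have "\<dots> \<le> 2 * \<gamma> * (1 - \<alpha>) * (L * (norm d)\<^sup>2) - \<alpha> * (2 - lam) * (norm d)\<^sup>2"
  proof -
    have "2 * \<gamma> * (1 - \<alpha>) * (d \<bullet> G) \<le> 2 * \<gamma> * (1 - \<alpha>) * (L * (norm d)\<^sup>2)"
      using convex_gradient_inner_le[OF cvx grad lip, of "2 * \<gamma> * (1 - \<alpha>)" "2 * \<gamma> * (1 - \<alpha>)" x' x]
        \<gamma> \<alpha>
      by (simp add: d_def G_def)
    moreover have "\<gamma> * (2 * \<gamma> - lam / L) * (norm G)\<^sup>2 \<le> 0"
      using \<gamma> L by (intro mult_nonpos_nonneg mult_nonneg_nonpos) (auto simp: field_simps)
    ultimately show ?thesis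
      by linarith
  qed
  finally show ?thesis
    by (simp add: d_def algebra_simps)
qed

lemma quad_model_change_second:
  fixes f :: "'a::real_inner \<Rightarrow> real"
  assumes cvx: "convex_on UNIV f" and grad: "\<And>x. (f has_derivative (\<lambda>h. g x \<bullet> h)) (at x)"
    and lip: "L-lipschitz_on UNIV g" and L: "0 < L"
    and lam: "0 < lam" and \<gamma>: "0 < \<gamma>" "\<gamma> \<le> lam / (2 * L) - \<alpha> / (2 * \<epsilon>2)"
    and \<alpha>: "0 < \<alpha>" "\<alpha> < 1" and \<epsilon>: "0 < \<epsilon>1" "0 < \<epsilon>2"
    and step: "lam *\<^sub>R (y - x) = \<alpha> *\<^sub>R (x' - x) - \<alpha> *\<^sub>R e + \<gamma> *\<^sub>R (g x' - g x)"
  shows "2 * lam * \<gamma> * (quad_model f g (\<gamma> / (1 - \<alpha>)) x' y - quad_model f g (\<gamma> / (1 - \<alpha>)) x y)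
    \<le> (\<alpha> * (1 - \<alpha>) * \<epsilon>1 + \<alpha> * \<gamma> * \<epsilon>2) * (norm e)\<^sup>2
       - ((1 - \<alpha>) * (2 * \<alpha> - lam) - (1 - \<alpha>) * \<alpha> / \<epsilon>1 - 2 * \<alpha> * \<gamma> * L) * (norm (x' - x))\<^sup>2"
proof -
  define s where "s = y - x"
  define d where "d = x' - x"
  define G where "G = g x' - g x"
  have step': "lam *\<^sub>R s = \<alpha> *\<^sub>R d - \<alpha> *\<^sub>R e + \<gamma> *\<^sub>R G"
    using step by (simp add: s_def d_def G_def)
  have sG: "lam * (s \<bullet> G) = \<alpha> * (d \<bullet> G) - \<alpha> * (e \<bullet> G) + \<gamma> * (norm G)\<^sup>2"
    using arg_cong[OF step', of "\<lambda>v. v \<bullet> G"]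
    by (simp add: inner_add_left inner_diff_left power2_norm_eq_inner)
  have sd: "lam * (s \<bullet> d) = \<alpha> * (norm d)\<^sup>2 - \<alpha> * (e \<bullet> d) + \<gamma> * (d \<bullet> G)"
    using arg_cong[OF step', of "\<lambda>v. v \<bullet> d"]
    by (simp add: inner_add_left inner_add_right inner_diff_left inner_diff_right
        power2_norm_eq_inner inner_commute)
  have "2 * lam * \<gamma> * (quad_model f g (\<gamma> / (1 - \<alpha>)) x' y - quad_model f g (\<gamma> / (1 - \<alpha>)) x y)
      \<le> 2 * \<gamma> * (lam * (s \<bullet> G)) - \<gamma> * lam / L * (norm G)\<^sup>2
        + (1 - \<alpha>) * (lam * (norm d)\<^sup>2 - 2 * (lam * (s \<bullet> d)))"
    using quad_model_change_scaled[OF cvx grad lip L _ \<gamma>(1), of lam "1 - \<alpha>" x' y x] lam \<alpha>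
    by (simp add: s_def d_def G_def)
  also have "\<dots> = 2 * \<gamma> * ((2 * \<alpha> - 1) * (d \<bullet> G)) + \<gamma> * \<alpha> * (2 * (e \<bullet> - G))
      + \<gamma> * (2 * \<gamma> - lam / L) * (norm G)\<^sup>2 - (1 - \<alpha>) * (2 * \<alpha> - lam) * (norm d)\<^sup>2
      + \<alpha> * (1 - \<alpha>) * (2 * (e \<bullet> d))"
    unfolding sG sd by (simp add: algebra_simps)
  also have "\<dots> \<le> 2 * \<gamma> * (\<alpha> * L * (norm d)\<^sup>2) + \<gamma> * \<alpha> * (\<epsilon>2 * (norm e)\<^sup>2 + (norm G)\<^sup>2 / \<epsilon>2)
      + \<gamma> * (2 * \<gamma> - lam / L) * (norm G)\<^sup>2 - (1 - \<alpha>) * (2 * \<alpha> - lam) * (norm d)\<^sup>2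
      + \<alpha> * (1 - \<alpha>) * (\<epsilon>1 * (norm e)\<^sup>2 + (norm d)\<^sup>2 / \<epsilon>1)"
  proof -
    have "(2 * \<alpha> - 1) * (d \<bullet> G) \<le> \<alpha> * L * (norm d)\<^sup>2"
      using convex_gradient_inner_le[OF cvx grad lip, of "2 * \<alpha> - 1" \<alpha> x' x] \<alpha>
      by (simp add: d_def G_def)
    then have "2 * \<gamma> * ((2 * \<alpha> - 1) * (d \<bullet> G)) \<le> 2 * \<gamma> * (\<alpha> * L * (norm d)\<^sup>2)"
      using \<gamma> by simp
    moreover have "\<gamma> * \<alpha> * (2 * (e \<bullet> - G)) \<le> \<gamma> * \<alpha> * (\<epsilon>2 * (norm e)\<^sup>2 + (norm G)\<^sup>2 / \<epsilon>2)"
      using inner_le_young[OF \<epsilon>(2), of e "- G"] \<gamma> \<alpha> by (intro mult_left_mono) auto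
    moreover have "\<alpha> * (1 - \<alpha>) * (2 * (e \<bullet> d)) \<le> \<alpha> * (1 - \<alpha>) * (\<epsilon>1 * (norm e)\<^sup>2 + (norm d)\<^sup>2 / \<epsilon>1)"
      using inner_le_young[OF \<epsilon>(1), of e d] \<alpha> by (intro mult_left_mono) auto
    ultimately show ?thesis
      by linarith
  qed
  also have "\<dots> = (\<alpha> * (1 - \<alpha>) * \<epsilon>1 + \<alpha> * \<gamma> * \<epsilon>2) * (norm e)\<^sup>2
       - ((1 - \<alpha>) * (2 * \<alpha> - lam) - (1 - \<alpha>) * \<alpha> / \<epsilon>1 - 2 * \<alpha> * \<gamma> * L) * (norm d)\<^sup>2
       + \<gamma> * (2 * \<gamma> - lam / L + \<alpha> / \<epsilon>2) * (norm G)\<^sup>2"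
    using \<epsilon> by (simp add: field_simps)
  also have "\<dots> \<le> (\<alpha> * (1 - \<alpha>) * \<epsilon>1 + \<alpha> * \<gamma> * \<epsilon>2) * (norm e)\<^sup>2
       - ((1 - \<alpha>) * (2 * \<alpha> - lam) - (1 - \<alpha>) * \<alpha> / \<epsilon>1 - 2 * \<alpha> * \<gamma> * L) * (norm d)\<^sup>2"
  proof -
    have "2 * \<gamma> - lam / L + \<alpha> / \<epsilon>2 \<le> 0"
      using \<gamma>(2) by (simp add: field_simps)
    then show ?thesis
      using \<gamma>(1) by (simp add: mult_nonpos_nonneg mult_nonneg_nonpos)
  qed
  finally show ?thesis
    by (simp add: d_def)
qed

section \<open>Proximal points of lower semicontinuous functions\<close>

lemma prox_set_gradient_eq:
  fixes f :: "'a::euclidean_space \<Rightarrow> real"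
  assumes grad: "\<And>x. (f has_derivative (\<lambda>h. g x \<bullet> h)) (at x)"
    and prox: "x \<in> prox_set (\<lambda>x. ereal (f x)) t z" and t: "0 < t"
  shows "z = x + t *\<^sub>R g x"
proof -
  define c where "c = 1 / (2 * t)"
  define H where "H w = f w + c * ((w - z) \<bullet> (w - z))" for w
  have "(H has_derivative (\<lambda>h. g x \<bullet> h + c * (2 * (h \<bullet> (x - z))))) (at x)"
    unfolding H_def
    by (auto intro!: derivative_eq_intros grad simp: fun_eq_iff inner_commute)
  moreover have "H x \<le> H w" for w
    using prox by (simp add: prox_set_def H_def c_def power2_norm_eq_inner)
  ultimately have "(\<lambda>h. g x \<bullet> h + c * (2 * (h \<bullet> (x - z)))) = (\<lambda>h. 0)"
    by (intro has_derivative_local_min) auto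
  then have "g x \<bullet> w + (w \<bullet> (x - z)) / t = 0" for w
    by (drule_tac fun_cong[of _ _ w]) (simp add: c_def)
  from this[of "x + t *\<^sub>R g x - z"] have "(x + t *\<^sub>R g x - z) \<bullet> (x + t *\<^sub>R g x - z) = 0"
    using t by (simp add: field_simps inner_commute inner_diff_left inner_add_left)
  then show ?thesis
    unfolding inner_eq_zero_iff by simp
qed

lemma prox_pt_eqI:
  fixes f :: "'a::euclidean_space \<Rightarrow> real"
  assumes cvx: "convex_on UNIV f" and grad: "\<And>x. (f has_derivative (\<lambda>h. g x \<bullet> h)) (at x)"
    and prox: "x \<in> prox_set (\<lambda>x. ereal (f x)) t z" and t: "0 < t"
  shows "prox_pt (\<lambda>x. ereal (f x)) t z = x"
proof -
  define y where "y = prox_pt (\<lambda>x. ereal (f x)) t z"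
  have "y \<in> prox_set (\<lambda>x. ereal (f x)) t z"
    unfolding y_def prox_pt_def using prox by (rule someI)
  then have "x - y = - t *\<^sub>R (g x - g y)"
    using prox_set_gradient_eq[OF grad prox t] prox_set_gradient_eq[OF grad _ t]
    by (simp add: algebra_simps)
  then have "(x - y) \<bullet> (x - y) = - t * ((x - y) \<bullet> (g x - g y))"
    by (metis inner_commute inner_scaleR_left)
  moreover have "0 \<le> (x - y) \<bullet> (g x - g y)"
    by (rule convex_gradient_monotone[OF cvx grad])
  ultimately have "(x - y) \<bullet> (x - y) = 0"
    using t inner_ge_zero[of "x - y"] mult_nonneg_nonneg[of t "(x - y) \<bullet> (g x - g y)"] by linarith
  then show ?thesis
    by (simp add: y_def)
qed

lemma prox_set_finite:
  assumes "proper_fun f" and "x \<in> prox_set f t u"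
  shows "\<bar>f x\<bar> \<noteq> \<infinity>"
proof -
  obtain w where "f w \<noteq> \<infinity>"
    using assms(1) by (auto simp: proper_fun_def)
  moreover have "f x + ereal ((norm (x - u))\<^sup>2 / (2 * t)) \<le> f w + ereal ((norm (w - u))\<^sup>2 / (2 * t))"
    using assms(2) by (simp add: prox_set_def)
  ultimately have "f x \<noteq> \<infinity>"
    by auto
  moreover have "f x \<noteq> -\<infinity>"
    using assms(1) by (simp add: proper_fun_def)
  ultimately show ?thesis
    by auto
qed

text \<open>The prox inequality at \<open>y\<close> bounds the Frechet quotient from below by
  \<open>-\<parallel>y - x\<parallel> / (2t)\<close>.\<close>
lemma frechet_subdiff_prox:
  fixes f :: "'a::euclidean_space \<Rightarrow> ereal"
  assumes proper: "proper_fun f" and prox: "x \<in> prox_set f t u" and t: "0 < t"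
  shows "(1 / t) *\<^sub>R (u - x) \<in> frechet_subdiff f x"
proof -
  define v where "v = (1 / t) *\<^sub>R (u - x)"
  have fin: "\<bar>f x\<bar> \<noteq> \<infinity>"
    by (rule prox_set_finite[OF proper prox])
  then obtain a where a: "f x = ereal a"
    by (cases "f x") auto
  have quotient_ge: "ereal (- norm (y - x) / (2 * t))
      \<le> (f y - f x - ereal (v \<bullet> (y - x))) * ereal (1 / norm (y - x))" if "y \<noteq> x" for y
  proof (cases "f y")
    case (real b)
    have "a + (norm (x - u))\<^sup>2 / (2 * t) \<le> b + (norm (y - u))\<^sup>2 / (2 * t)"
      using prox[unfolded prox_set_def, THEN CollectD, THEN spec[of _ y]] a real by simp
    moreover have "(norm (y - u))\<^sup>2 = (norm (y - x))\<^sup>2 + 2 * ((y - x) \<bullet> (x - u)) + (norm (x - u))\<^sup>2"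
      by (simp add: power2_norm_eq_inner inner_diff_left inner_diff_right inner_commute)
    ultimately have "- ((norm (y - x))\<^sup>2 / (2 * t)) \<le> b - a - v \<bullet> (y - x)"
      using t by (simp add: v_def field_simps inner_diff_left inner_diff_right inner_commute)
    then have "- ((norm (y - x))\<^sup>2 / (2 * t)) / norm (y - x) \<le> (b - a - v \<bullet> (y - x)) / norm (y - x)"
      by (rule divide_right_mono) simp
    then show ?thesis
      using that a real by (simp add: power2_eq_square)
  next
    case PInf
    then show ?thesis
      using that a by simp
  next
    case MInf
    then show ?thesis
      using proper by (simp add: proper_fun_def)
  qed
  have "((\<lambda>y. - norm (y - x) / (2 * t)) \<longlongrightarrow> - norm (x - x) / (2 * t)) (at x)"
    using t by (intro tendsto_intros) auto
  then have "((\<lambda>y. ereal (- norm (y - x) / (2 * t))) \<longlongrightarrow> 0) (at x)"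
    by (simp add: zero_ereal_def tendsto_ereal)
  then have "0 = Liminf (at x) (\<lambda>y. ereal (- norm (y - x) / (2 * t)))"
    by (metis at_neq_bot lim_imp_Liminf)
  also have "\<dots> \<le> Liminf (at x) (\<lambda>y. (f y - f x - ereal (v \<bullet> (y - x))) * ereal (1 / norm (y - x)))"
    by (intro Liminf_mono)
      (unfold eventually_at_filter, intro always_eventually allI impI quotient_ge)
  finally show ?thesis
    using fin by (simp add: frechet_subdiff_def v_def)
qed

lemma lsc_fun_eventually_less:
  assumes "lsc_fun f" and "s \<longlonglongrightarrow> x" and "c < f x"
  shows "eventually (\<lambda>j. c < f (s j)) sequentially"
proof -
  have "eventually (\<lambda>w. c < f w) (at x)"
    using assms(1,3) by (auto simp: lsc_fun_def le_Liminf_iff)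
  then have "eventually (\<lambda>w. c < f w) (nhds x)"
    using assms(3) by (auto simp: eventually_at_filter elim: eventually_mono)
  then show ?thesis
    using assms(2) by (rule eventually_compose_filterlim)
qed

lemma lsc_fun_le_of_tendsto:
  assumes "lsc_fun f" and "s \<longlonglongrightarrow> x" and "eventually (\<lambda>j. f (s j) \<le> c) sequentially"
  shows "f x \<le> c"
proof (rule ccontr)
  assume "\<not> f x \<le> c"
  then have "eventually (\<lambda>j. c < f (s j)) sequentially"
    using lsc_fun_eventually_less[OF assms(1,2)] by simp
  with assms(3) have "eventually (\<lambda>j. False) sequentially"
    by eventually_elim simp
  then show False
    by simp
qed

lemma tendsto_prox_value:
  fixes f :: "'a::euclidean_space \<Rightarrow> ereal"
  assumes proper: "proper_fun f" and lsc: "lsc_fun f" and t: "0 < t"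
    and prox: "\<And>j. y j \<in> prox_set f t (u j)"
    and y: "y \<longlonglongrightarrow> x" and u: "(\<lambda>j. u j - y j) \<longlonglongrightarrow> w" and finite: "f x \<noteq> \<infinity>"
  shows "(\<lambda>j. f (y j)) \<longlonglongrightarrow> f x"
proof -
  obtain c where c: "f x = ereal c"
    using finite proper by (cases "f x") (auto simp: proper_fun_def)
  define \<delta> where "\<delta> j = ((norm (x - u j))\<^sup>2 - (norm (y j - u j))\<^sup>2) / (2 * t)" for j
  have upper: "f (y j) \<le> ereal (c + \<delta> j)" for j
  proof -
    have "f (y j) + ereal ((norm (y j - u j))\<^sup>2 / (2 * t)) \<le> ereal (c + (norm (x - u j))\<^sup>2 / (2 * t))"
      using prox[of j, unfolded prox_set_def, THEN CollectD, THEN spec[of _ x]] c by simp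
    then show ?thesis
      unfolding \<delta>_def diff_divide_distrib by (cases "f (y j)") auto
  qed
  have "\<delta> \<longlonglongrightarrow> ((norm (x - x - w))\<^sup>2 - (norm (- w))\<^sup>2) / (2 * t)"
  proof -
    have "\<And>j. x - u j = (x - y j) - (u j - y j)" "\<And>j. y j - u j = - (u j - y j)"
      by simp_all
    then show ?thesis
      unfolding \<delta>_def using t by (simp only:) (intro tendsto_intros y u, simp)
  qed
  then have "(\<lambda>j. ereal (c + \<delta> j)) \<longlonglongrightarrow> ereal (c + 0)"
    by (intro tendsto_intros) simp
  then have lim: "(\<lambda>j. ereal (c + \<delta> j)) \<longlonglongrightarrow> f x"
    using c by simp
  show ?thesis
  proof (rule order_tendstoI)
    fix a
    assume "a < f x"
    then show "eventually (\<lambda>j. a < f (y j)) sequentially"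
      by (rule lsc_fun_eventually_less[OF lsc y])
  next
    fix a
    assume "f x < a"
    with lim have "eventually (\<lambda>j. ereal (c + \<delta> j) < a) sequentially"
      by (rule order_tendstoD(2))
    then show "eventually (\<lambda>j. f (y j) < a) sequentially"
      by eventually_elim (rule le_less_trans[OF upper])
  qed
qed

lemma limiting_subdiff_of_prox:
  fixes f :: "'a::euclidean_space \<Rightarrow> ereal"
  assumes "proper_fun f" and "0 < t" and "\<And>j. y j \<in> prox_set f t (u j)"
    and "y \<longlonglongrightarrow> x" and "(\<lambda>j. f (y j)) \<longlonglongrightarrow> f x" and "(\<lambda>j. (1 / t) *\<^sub>R (u j - y j)) \<longlonglongrightarrow> v"
  shows "v \<in> limiting_subdiff f x"
  unfolding limiting_subdiff_def using assms frechet_subdiff_prox by blast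

section \<open>Sequences\<close>

lemma tendsto_zero_of_norm_power2:
  fixes X :: "nat \<Rightarrow> 'a::real_normed_vector"
  assumes "(\<lambda>k. (norm (X k))\<^sup>2) \<longlonglongrightarrow> 0"
  shows "X \<longlonglongrightarrow> 0"
proof -
  have "(\<lambda>k. sqrt ((norm (X k))\<^sup>2)) \<longlonglongrightarrow> sqrt 0"
    by (intro tendsto_intros assms)
  then show ?thesis
    by (simp add: tendsto_norm_zero_iff)
qed

lemma lipschitz_diff_tendsto_zero:
  fixes g :: "'a::real_normed_vector \<Rightarrow> 'b::real_normed_vector"
  assumes "L-lipschitz_on UNIV g" and "(\<lambda>k. x (Suc k) - x k) \<longlonglongrightarrow> 0"
  shows "(\<lambda>k. g (x (Suc k)) - g (x k)) \<longlonglongrightarrow> 0"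
  using assms(2)
proof (rule tendsto_0_le[where K = L])
  show "\<forall>\<^sub>F k in sequentially. norm (g (x (Suc k)) - g (x k)) \<le> norm (x (Suc k) - x k) * L"
    using lipschitz_on_normD[OF assms(1)] by (simp add: mult.commute)
qed

lemma bounded_range_lipschitz_comp:
  fixes g :: "'a::euclidean_space \<Rightarrow> 'b::euclidean_space"
  assumes "L-lipschitz_on UNIV g" and "bounded (range x)"
  shows "bounded (range (\<lambda>k. g (x k)))"
proof -
  have "uniformly_continuous_on (range x) g"
    using lipschitz_on_subset[OF assms(1)] by (intro lipschitz_on_uniformly_continuous) auto
  then show ?thesis
    using bounded_uniformly_continuous_image[OF _ assms(2)] by (simp add: image_image)
qed

lemma tendsto_inner_zero_bounded:
  fixes a b :: "nat \<Rightarrow> 'a::real_inner"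
  assumes "a \<longlonglongrightarrow> 0" and "bounded (range b)"
  shows "(\<lambda>k. a k \<bullet> b k) \<longlonglongrightarrow> 0"
  using bounded_bilinear.Zfun_prod_Bfun[OF bounded_bilinear_inner, of a sequentially b] assms
  by (simp add: tendsto_Zfun_iff Bseq_eq_bounded)

lemma cluster_pts_eq_of_diff_tendsto:
  fixes a b :: "nat \<Rightarrow> 'a::real_normed_vector"
  assumes "(\<lambda>k. a k - b k) \<longlonglongrightarrow> 0"
  shows "cluster_pts a = cluster_pts b"
proof -
  have "p \<in> cluster_pts b" if p: "p \<in> cluster_pts a" and diff: "(\<lambda>k. a k - b k) \<longlonglongrightarrow> 0"
    for a b :: "nat \<Rightarrow> 'a" and p
  proof -
    obtain r where r: "strict_mono r" "(a \<circ> r) \<longlonglongrightarrow> p"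
      using p by (auto simp: cluster_pts_def)
    have "(\<lambda>j. a (r j) - (a (r j) - b (r j))) \<longlonglongrightarrow> p - 0"
      using r LIMSEQ_subseq_LIMSEQ[OF diff r(1)] by (intro tendsto_intros) (simp_all add: o_def)
    then show ?thesis
      using r(1) by (auto simp: cluster_pts_def o_def)
  qed
  moreover have "(\<lambda>k. b k - a k) \<longlonglongrightarrow> 0"
    using tendsto_minus[OF assms] by simp
  ultimately show ?thesis
    using assms by blast
qed

section \<open>The relaxed Ryu envelope\<close>

definition ryu_model ::
  "('a::real_inner \<Rightarrow> real) \<Rightarrow> ('a \<Rightarrow> 'a) \<Rightarrow> ('a \<Rightarrow> real) \<Rightarrow> ('a \<Rightarrow> 'a) \<Rightarrow> real \<Rightarrow> real
   \<Rightarrow> 'a \<Rightarrow> 'a \<Rightarrow> 'a \<Rightarrow> real" where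
  "ryu_model f1 g1 f2 g2 \<gamma> \<alpha> p q y = quad_model f1 g1 (\<gamma> / \<alpha>) p y + quad_model f2 g2 (\<gamma> / (1 - \<alpha>)) q y"

lemma ryu_env_eq_INF_ryu_model:
  "ryu_env f1 g1 f2 g2 f3 \<gamma> \<alpha> z1 z2 =
    (let x1 = prox_pt (\<lambda>x. ereal (f1 x)) \<gamma> z1;
         x2 = prox_pt (\<lambda>x. ereal (f2 x)) (\<gamma> / \<alpha>) (z2 /\<^sub>R \<alpha> + x1)
     in INF y. f3 y + ereal (ryu_model f1 g1 f2 g2 \<gamma> \<alpha> x1 x2 y))"
  by (simp add: ryu_env_def ryu_model_def quad_model_def Let_def add.assoc)

text \<open>Since \<open>\<alpha> / \<gamma> + (1 - \<alpha>) / \<gamma> = 1 / \<gamma>\<close>, the model is \<open>\<parallel>y - c\<parallel>\<^sup>2 / (2\<gamma>)\<close> up to a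
  constant; so minimising \<open>f3 + ryu_model\<close> is a prox step of \<open>f3\<close> at \<open>c\<close>.\<close>
lemma ryu_model_diff:
  fixes f1 f2 :: "'a::real_inner \<Rightarrow> real" and g1 g2 :: "'a \<Rightarrow> 'a" and p q y w :: 'a
  assumes "0 < \<gamma>" and "0 < \<alpha>" and "\<alpha> < 1"
  defines "c \<equiv> \<alpha> *\<^sub>R p + (1 - \<alpha>) *\<^sub>R q - \<gamma> *\<^sub>R (g1 p + g2 q)"
  shows "ryu_model f1 g1 f2 g2 \<gamma> \<alpha> p q y - ryu_model f1 g1 f2 g2 \<gamma> \<alpha> p q w
    = ((norm (y - c))\<^sup>2 - (norm (w - c))\<^sup>2) / (2 * \<gamma>)"
proof -
  define N where "N = (norm y)\<^sup>2 - (norm w)\<^sup>2"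
  have sq: "(norm (y - a))\<^sup>2 - (norm (w - a))\<^sup>2 = N - 2 * ((y - w) \<bullet> a)" for a :: 'a
    by (simp add: N_def power2_norm_eq_inner inner_diff_left inner_diff_right inner_commute)
  have quad: "(norm (y - a))\<^sup>2 / (2 * t) - (norm (w - a))\<^sup>2 / (2 * t) = (N - 2 * ((y - w) \<bullet> a)) / (2 * t)"
    for a :: 'a and t :: real
    by (simp only: sq flip: diff_divide_distrib)
  have "ryu_model f1 g1 f2 g2 \<gamma> \<alpha> p q y - ryu_model f1 g1 f2 g2 \<gamma> \<alpha> p q w
      = (y - w) \<bullet> g1 p + (N - 2 * ((y - w) \<bullet> p)) / (2 * (\<gamma> / \<alpha>))
        + (y - w) \<bullet> g2 q + (N - 2 * ((y - w) \<bullet> q)) / (2 * (\<gamma> / (1 - \<alpha>)))"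
    using quad[of p "\<gamma> / \<alpha>"] quad[of q "\<gamma> / (1 - \<alpha>)"]
    by (simp add: ryu_model_def quad_model_def inner_diff_left)
  also have "\<dots> = (N - 2 * (\<alpha> * ((y - w) \<bullet> p) + (1 - \<alpha>) * ((y - w) \<bullet> q)
      - \<gamma> * ((y - w) \<bullet> g1 p) - \<gamma> * ((y - w) \<bullet> g2 q))) / (2 * \<gamma>)"
    using assms(1-3) by (simp add: field_simps)
  also have "\<dots> = (N - 2 * ((y - w) \<bullet> c)) / (2 * \<gamma>)"
    by (simp add: c_def inner_add_right inner_diff_right algebra_simps)
  also have "\<dots> = ((norm (y - c))\<^sup>2 - (norm (w - c))\<^sup>2) / (2 * \<gamma>)"
    by (simp only: sq)
  finally show ?thesis .
qed

lemma INF_plus_eq_at_prox: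
  fixes h :: "'a::euclidean_space \<Rightarrow> ereal"
  assumes prox: "x \<in> prox_set h \<gamma> c"
    and diff: "\<And>y w. Q y - Q w = ((norm (y - c))\<^sup>2 - (norm (w - c))\<^sup>2) / (2 * \<gamma>)"
  shows "(INF y. h y + ereal (Q y)) = h x + ereal (Q x)"
proof (rule antisym)
  show "(INF y. h y + ereal (Q y)) \<le> h x + ereal (Q x)"
    by (rule INF_lower) simp
next
  define K where "K = Q x - (norm (x - c))\<^sup>2 / (2 * \<gamma>)"
  have Q: "Q y = (norm (y - c))\<^sup>2 / (2 * \<gamma>) + K" for y
    using diff[of y x] by (simp add: K_def diff_divide_distrib)
  show "h x + ereal (Q x) \<le> (INF y. h y + ereal (Q y))"
  proof (rule INF_greatest)
    fix y
    have "h x + ereal ((norm (x - c))\<^sup>2 / (2 * \<gamma>)) \<le> h y + ereal ((norm (y - c))\<^sup>2 / (2 * \<gamma>))"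
      using prox by (simp add: prox_set_def)
    then have "h x + ereal ((norm (x - c))\<^sup>2 / (2 * \<gamma>)) + ereal K
        \<le> h y + ereal ((norm (y - c))\<^sup>2 / (2 * \<gamma>)) + ereal K"
      by (rule add_right_mono)
    then show "h x + ereal (Q x) \<le> h y + ereal (Q y)"
      by (simp add: Q add.assoc)
  qed
qed

section \<open>The relaxed Ryu iteration\<close>

locale relaxed_ryu =
  fixes f1 f2 :: "'a::euclidean_space \<Rightarrow> real" and g1 g2 :: "'a \<Rightarrow> 'a" and f3 :: "'a \<Rightarrow> ereal"
    and L1 L2 lam \<alpha> \<gamma> \<epsilon>1 \<epsilon>2 :: real and x1 x2 x3 z1 z2 :: "nat \<Rightarrow> 'a"
  assumes cvx1: "convex_on UNIV f1" and cvx2: "convex_on UNIV f2"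
    and grad1: "\<And>x. (f1 has_derivative (\<lambda>h. g1 x \<bullet> h)) (at x)"
    and grad2: "\<And>x. (f2 has_derivative (\<lambda>h. g2 x \<bullet> h)) (at x)"
    and L1: "0 < L1" and L2: "0 < L2"
    and lip1: "L1-lipschitz_on UNIV g1" and lip2: "L2-lipschitz_on UNIV g2"
    and proper3: "proper_fun f3" and lsc3: "lsc_fun f3"
    and lower_bound: "\<exists>m. \<forall>y. ereal m \<le> ereal (f1 y) + ereal (f2 y) + f3 y"
    and lam: "0 < lam" and \<alpha>: "0 < \<alpha>" "\<alpha> < 1" and \<epsilon>: "0 < \<epsilon>1" "0 < \<epsilon>2"
    and stepsize: "\<gamma> \<in> stepsize_set L1 L2 \<alpha> lam \<epsilon>1 \<epsilon>2"
    and stepsize_L: "\<gamma> \<le> min (\<alpha> / L1) ((1 - \<alpha>) / L2)"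
    and it1: "\<And>k. x1 k \<in> prox_set (\<lambda>x. ereal (f1 x)) \<gamma> (z1 k)"
    and it2: "\<And>k. x2 k \<in> prox_set (\<lambda>x. ereal (f2 x)) (\<gamma> / \<alpha>) (z2 k /\<^sub>R \<alpha> + x1 k)"
    and it3: "\<And>k. x3 k \<in> prox_set f3 \<gamma> (x1 k - z1 k + x2 k - z2 k)"
    and upd1: "\<And>k. z1 (Suc k) = z1 k + lam *\<^sub>R (x3 k - x1 k)"
    and upd2: "\<And>k. z2 (Suc k) = z2 k + lam *\<^sub>R (x3 k - x2 k)"
begin

lemma stepsize_bounds: "0 < \<gamma>" "\<gamma> \<le> lam / (2 * L1)" "\<gamma> \<le> lam / (2 * L2) - \<alpha> / (2 * \<epsilon>2)"
  using stepsize by (auto simp: stepsize_set_def Let_def)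

text \<open>Positivity of these coefficients is exactly the two strict upper bounds on \<open>\<gamma>\<close> in
  \<open>stepsize_set\<close> (the paper's \<open>\<gamma>\<^sub>2\<close> and \<open>\<gamma>\<^sub>3\<close>).\<close>

definition \<kappa>1 :: real where
  "\<kappa>1 = \<alpha> * (2 - lam) - \<alpha> * (1 - \<alpha>) * \<epsilon>1 - \<alpha> * \<gamma> * \<epsilon>2 - 2 * (1 - \<alpha>) * \<gamma> * L1"

definition \<kappa>2 :: real where
  "\<kappa>2 = (1 - \<alpha>) * (2 * \<alpha> - lam) - (1 - \<alpha>) * \<alpha> / \<epsilon>1 - 2 * \<alpha> * \<gamma> * L2"

lemma \<kappa>_pos: "0 < \<kappa>1" "0 < \<kappa>2"
proof -
  have "\<gamma> < \<alpha> * (2 - lam - (1 - \<alpha>) * \<epsilon>1) / (\<alpha> * \<epsilon>2 + 2 * (1 - \<alpha>) * L1)"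
    "\<gamma> < (1 - \<alpha>) * (\<epsilon>1 * (2 * \<alpha> - lam) - \<alpha>) / (2 * \<alpha> * L2 * \<epsilon>1)"
    using stepsize by (auto simp: stepsize_set_def Let_def)
  moreover have "0 < \<alpha> * \<epsilon>2 + 2 * (1 - \<alpha>) * L1" "0 < 2 * \<alpha> * L2 * \<epsilon>1"
    using \<alpha> \<epsilon> L1 L2 by (simp_all add: add_pos_pos)
  ultimately show "0 < \<kappa>1" "0 < \<kappa>2"
    using \<epsilon> by (simp_all add: \<kappa>1_def \<kappa>2_def pos_less_divide_eq field_simps)
qed

lemma z1_eq: "z1 k = x1 k + \<gamma> *\<^sub>R g1 (x1 k)"
  using prox_set_gradient_eq[OF grad1 it1 stepsize_bounds(1)] .

lemma z2_eq: "z2 k = \<alpha> *\<^sub>R (x2 k - x1 k) + \<gamma> *\<^sub>R g2 (x2 k)"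
proof -
  have "z2 k /\<^sub>R \<alpha> + x1 k = x2 k + (\<gamma> / \<alpha>) *\<^sub>R g2 (x2 k)"
    using stepsize_bounds(1) \<alpha> by (intro prox_set_gradient_eq[OF grad2 it2]) simp
  then have "\<alpha> *\<^sub>R (z2 k /\<^sub>R \<alpha> + x1 k) = \<alpha> *\<^sub>R (x2 k + (\<gamma> / \<alpha>) *\<^sub>R g2 (x2 k))"
    by simp
  then show ?thesis
    using \<alpha> by (simp add: algebra_simps)
qed

lemma x1_step: "lam *\<^sub>R (x3 k - x1 k) = (x1 (Suc k) - x1 k) + \<gamma> *\<^sub>R (g1 (x1 (Suc k)) - g1 (x1 k))"
  using upd1[of k] z1_eq[of k] z1_eq[of "Suc k"] by (simp add: algebra_simps)

lemma x2_step: "lam *\<^sub>R (x3 k - x2 k)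
    = \<alpha> *\<^sub>R (x2 (Suc k) - x2 k) - \<alpha> *\<^sub>R (x1 (Suc k) - x1 k) + \<gamma> *\<^sub>R (g2 (x2 (Suc k)) - g2 (x2 k))"
  using upd2[of k] z2_eq[of k] z2_eq[of "Suc k"] by (simp add: algebra_simps)

lemma prox_center_eq: "x1 k - z1 k + x2 k - z2 k
    = \<alpha> *\<^sub>R x1 k + (1 - \<alpha>) *\<^sub>R x2 k - \<gamma> *\<^sub>R (g1 (x1 k) + g2 (x2 k))"
  by (simp add: z1_eq z2_eq algebra_simps)

abbreviation model :: "nat \<Rightarrow> 'a \<Rightarrow> real" where
  "model k \<equiv> ryu_model f1 g1 f2 g2 \<gamma> \<alpha> (x1 k) (x2 k)"

definition env :: "nat \<Rightarrow> real" where
  "env k = real_of_ereal (f3 (x3 k)) + model k (x3 k)"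

lemma f3_x3_finite: "\<bar>f3 (x3 k)\<bar> \<noteq> \<infinity>"
  by (rule prox_set_finite[OF proper3 it3])

lemma ereal_env: "ereal (env k) = f3 (x3 k) + ereal (model k (x3 k))"
  using f3_x3_finite[of k] by (cases "f3 (x3 k)") (simp_all add: env_def)

lemma INF_model_eq_env: "(INF y. f3 y + ereal (model k y)) = ereal (env k)"
  using it3[of k] ryu_model_diff[OF stepsize_bounds(1) \<alpha>]
  by (subst ereal_env, intro INF_plus_eq_at_prox) (simp_all add: prox_center_eq)

lemma env_le: "ereal (env k) \<le> f3 y + ereal (model k y)"
  unfolding INF_model_eq_env[symmetric] by (rule INF_lower) simp

lemma ryu_env_eq_env: "ryu_env f1 g1 f2 g2 f3 \<gamma> \<alpha> (z1 k) (z2 k) = ereal (env k)"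
proof -
  have "prox_pt (\<lambda>x. ereal (f1 x)) \<gamma> (z1 k) = x1 k"
    by (rule prox_pt_eqI[OF cvx1 grad1 it1 stepsize_bounds(1)])
  moreover have "prox_pt (\<lambda>x. ereal (f2 x)) (\<gamma> / \<alpha>) (z2 k /\<^sub>R \<alpha> + x1 k) = x2 k"
    using stepsize_bounds(1) \<alpha> by (intro prox_pt_eqI[OF cvx2 grad2 it2]) simp
  ultimately show ?thesis
    by (simp add: ryu_env_eq_INF_ryu_model INF_model_eq_env)
qed

lemma sum_le_model: "f1 y + f2 y \<le> model k y"
proof -
  have "f1 y \<le> quad_model f1 g1 (\<gamma> / \<alpha>) (x1 k) y"
    using stepsize_L stepsize_bounds(1) \<alpha> L1
    by (intro quad_model_upper_bound[OF grad1 lip1]) (auto simp: field_simps)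
  moreover have "f2 y \<le> quad_model f2 g2 (\<gamma> / (1 - \<alpha>)) (x2 k) y"
    using stepsize_L stepsize_bounds(1) \<alpha> L2
    by (intro quad_model_upper_bound[OF grad2 lip2]) (auto simp: field_simps)
  ultimately show ?thesis
    by (simp add: ryu_model_def)
qed

lemma env_decrease:
  "\<kappa>1 * (norm (x1 (Suc k) - x1 k))\<^sup>2 + \<kappa>2 * (norm (x2 (Suc k) - x2 k))\<^sup>2
    \<le> 2 * lam * \<gamma> * (env k - env (Suc k))"
proof -
  have "ereal (env (Suc k)) \<le> f3 (x3 k) + ereal (model (Suc k) (x3 k))"
    by (rule env_le)
  also have "\<dots> = ereal (env k - model k (x3 k) + model (Suc k) (x3 k))"
    using ereal_env[of k] f3_x3_finite[of k] by (cases "f3 (x3 k)") auto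
  finally have "2 * lam * \<gamma> * (env (Suc k) - env k)
      \<le> 2 * lam * \<gamma> * (model (Suc k) (x3 k) - model k (x3 k))"
    using lam stepsize_bounds(1) by (intro mult_left_mono) auto
  also have "\<dots> = 2 * lam * \<gamma> * (quad_model f1 g1 (\<gamma> / \<alpha>) (x1 (Suc k)) (x3 k)
        - quad_model f1 g1 (\<gamma> / \<alpha>) (x1 k) (x3 k))
      + 2 * lam * \<gamma> * (quad_model f2 g2 (\<gamma> / (1 - \<alpha>)) (x2 (Suc k)) (x3 k)
        - quad_model f2 g2 (\<gamma> / (1 - \<alpha>)) (x2 k) (x3 k))"
    by (simp add: ryu_model_def algebra_simps)
  also have "\<dots> \<le> (2 * (1 - \<alpha>) * \<gamma> * L1 - \<alpha> * (2 - lam)) * (norm (x1 (Suc k) - x1 k))\<^sup>2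
      + ((\<alpha> * (1 - \<alpha>) * \<epsilon>1 + \<alpha> * \<gamma> * \<epsilon>2) * (norm (x1 (Suc k) - x1 k))\<^sup>2
        - ((1 - \<alpha>) * (2 * \<alpha> - lam) - (1 - \<alpha>) * \<alpha> / \<epsilon>1 - 2 * \<alpha> * \<gamma> * L2)
          * (norm (x2 (Suc k) - x2 k))\<^sup>2)"
    by (intro add_mono
        quad_model_change_first[OF cvx1 grad1 lip1 L1 lam stepsize_bounds(1,2) \<alpha> x1_step[of k]]
        quad_model_change_second[OF cvx2 grad2 lip2 L2 lam stepsize_bounds(1,3) \<alpha> \<epsilon> x2_step[of k]])
  also have "\<dots> = - \<kappa>1 * (norm (x1 (Suc k) - x1 k))\<^sup>2 - \<kappa>2 * (norm (x2 (Suc k) - x2 k))\<^sup>2"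
    by (simp add: \<kappa>1_def \<kappa>2_def algebra_simps)
  finally show ?thesis
    by (simp add: algebra_simps)
qed

lemma env_bounded_below: "\<exists>m. \<forall>k. m \<le> env k"
proof -
  obtain m where m: "\<And>y. ereal m \<le> ereal (f1 y) + ereal (f2 y) + f3 y"
    using lower_bound by blast
  have "m \<le> env k" for k
  proof -
    have "ereal m \<le> ereal (f1 (x3 k) + f2 (x3 k)) + f3 (x3 k)"
      using m[of "x3 k"] by simp
    also have "\<dots> \<le> ereal (model k (x3 k)) + f3 (x3 k)"
      using sum_le_model by (intro add_right_mono) simp
    finally have "ereal m \<le> ereal (env k)"
      by (simp add: ereal_env add.commute)
    then show ?thesis
      by simp
  qed
  then show ?thesis
    by blast
qed

lemma env_decseq: "decseq env"
proof (rule decseq_SucI)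
  fix k
  have "0 \<le> \<kappa>1 * (norm (x1 (Suc k) - x1 k))\<^sup>2 + \<kappa>2 * (norm (x2 (Suc k) - x2 k))\<^sup>2"
    using \<kappa>_pos by simp
  then have "0 \<le> 2 * lam * \<gamma> * (env k - env (Suc k))"
    using env_decrease by (rule order_trans)
  moreover have "0 < 2 * lam * \<gamma>"
    using lam stepsize_bounds(1) by simp
  ultimately show "env (Suc k) \<le> env k"
    by (simp add: zero_le_mult_iff)
qed

lemma env_convergent: "convergent env"
  using env_bounded_below env_decseq by (metis Bseq_monoseq_convergent decseq_bounded monoseq_iff)

lemma x12_diff_tendsto_zero:
  "(\<lambda>k. x1 (Suc k) - x1 k) \<longlonglongrightarrow> 0" "(\<lambda>k. x2 (Suc k) - x2 k) \<longlonglongrightarrow> 0"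
proof -
  define S where "S k = \<kappa>1 * (norm (x1 (Suc k) - x1 k))\<^sup>2 + \<kappa>2 * (norm (x2 (Suc k) - x2 k))\<^sup>2" for k
  obtain m where m: "\<And>k. m \<le> env k"
    using env_bounded_below by blast
  have "(\<Sum>i<n. S i) \<le> 2 * lam * \<gamma> * (env 0 - m)" for n
  proof -
    have "(\<Sum>i<n. S i) \<le> (\<Sum>i<n. 2 * lam * \<gamma> * (env i - env (Suc i)))"
      unfolding S_def by (intro sum_mono env_decrease)
    also have "\<dots> = 2 * lam * \<gamma> * (env 0 - env n)"
      by (simp add: sum_distrib_left[symmetric] sum_lessThan_telescope')
    also have "\<dots> \<le> 2 * lam * \<gamma> * (env 0 - m)"
      using m[of n] lam stepsize_bounds(1) by (intro mult_left_mono) auto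
    finally show ?thesis .
  qed
  then have "summable S"
    using \<kappa>_pos by (intro summableI_nonneg_bounded) (auto simp: S_def)
  then have S: "S \<longlonglongrightarrow> 0"
    by (rule summable_LIMSEQ_zero)
  have lim: "(\<lambda>k. S k / \<kappa>1) \<longlonglongrightarrow> 0" "(\<lambda>k. S k / \<kappa>2) \<longlonglongrightarrow> 0"
    using tendsto_divide_zero[OF S] by auto
  have le: "(norm (x1 (Suc k) - x1 k))\<^sup>2 \<le> S k / \<kappa>1" "(norm (x2 (Suc k) - x2 k))\<^sup>2 \<le> S k / \<kappa>2"
    for k
    using \<kappa>_pos by (simp_all add: S_def pos_le_divide_eq)
  have "(\<lambda>k. (norm (x1 (Suc k) - x1 k))\<^sup>2) \<longlonglongrightarrow> 0"
    by (rule real_tendsto_sandwich[OF _ _ tendsto_const lim(1)]) (simp_all add: le)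
  moreover have "(\<lambda>k. (norm (x2 (Suc k) - x2 k))\<^sup>2) \<longlonglongrightarrow> 0"
    by (rule real_tendsto_sandwich[OF _ _ tendsto_const lim(2)]) (simp_all add: le)
  ultimately show "(\<lambda>k. x1 (Suc k) - x1 k) \<longlonglongrightarrow> 0" "(\<lambda>k. x2 (Suc k) - x2 k) \<longlonglongrightarrow> 0"
    by (simp_all add: tendsto_zero_of_norm_power2)
qed

lemma x3_minus_x1_tendsto_zero: "(\<lambda>k. x3 k - x1 k) \<longlonglongrightarrow> 0"
proof -
  have "(\<lambda>k. (1 / lam) *\<^sub>R ((x1 (Suc k) - x1 k) + \<gamma> *\<^sub>R (g1 (x1 (Suc k)) - g1 (x1 k))))
      \<longlonglongrightarrow> (1 / lam) *\<^sub>R (0 + \<gamma> *\<^sub>R 0)"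
    by (intro tendsto_intros x12_diff_tendsto_zero lipschitz_diff_tendsto_zero[OF lip1])
  moreover have "x3 k - x1 k
      = (1 / lam) *\<^sub>R ((x1 (Suc k) - x1 k) + \<gamma> *\<^sub>R (g1 (x1 (Suc k)) - g1 (x1 k)))" for k
    using lam by (simp flip: x1_step)
  ultimately show ?thesis
    by simp
qed

lemma x3_minus_x2_tendsto_zero: "(\<lambda>k. x3 k - x2 k) \<longlonglongrightarrow> 0"
proof -
  have "(\<lambda>k. (1 / lam) *\<^sub>R (\<alpha> *\<^sub>R (x2 (Suc k) - x2 k) - \<alpha> *\<^sub>R (x1 (Suc k) - x1 k)
        + \<gamma> *\<^sub>R (g2 (x2 (Suc k)) - g2 (x2 k))))
      \<longlonglongrightarrow> (1 / lam) *\<^sub>R (\<alpha> *\<^sub>R 0 - \<alpha> *\<^sub>R 0 + \<gamma> *\<^sub>R 0)"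
    by (intro tendsto_intros x12_diff_tendsto_zero lipschitz_diff_tendsto_zero[OF lip2])
  moreover have "x3 k - x2 k = (1 / lam) *\<^sub>R (\<alpha> *\<^sub>R (x2 (Suc k) - x2 k) - \<alpha> *\<^sub>R (x1 (Suc k) - x1 k)
        + \<gamma> *\<^sub>R (g2 (x2 (Suc k)) - g2 (x2 k)))" for k
    using lam by (simp flip: x2_step)
  ultimately show ?thesis
    by simp
qed

lemma z_diff_tendsto_zero: "(\<lambda>k. z1 (Suc k) - z1 k) \<longlonglongrightarrow> 0" "(\<lambda>k. z2 (Suc k) - z2 k) \<longlonglongrightarrow> 0"
  using tendsto_scaleR[OF tendsto_const x3_minus_x1_tendsto_zero, of lam]
    tendsto_scaleR[OF tendsto_const x3_minus_x2_tendsto_zero, of lam]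
  by (simp_all add: upd1 upd2)

lemma x3_diff_tendsto_zero: "(\<lambda>k. x3 (Suc k) - x3 k) \<longlonglongrightarrow> 0"
proof -
  have "(\<lambda>k. (x3 (Suc k) - x1 (Suc k)) + (x1 (Suc k) - x1 k) - (x3 k - x1 k)) \<longlonglongrightarrow> 0 + 0 - 0"
    by (intro tendsto_intros LIMSEQ_Suc[OF x3_minus_x1_tendsto_zero] x12_diff_tendsto_zero
        x3_minus_x1_tendsto_zero)
  then show ?thesis
    by simp
qed

lemma cluster_pts_x1_x2: "cluster_pts x1 = cluster_pts x3" "cluster_pts x2 = cluster_pts x3"
  using tendsto_minus[OF x3_minus_x1_tendsto_zero] tendsto_minus[OF x3_minus_x2_tendsto_zero]
  by (simp_all add: cluster_pts_eq_of_diff_tendsto)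

lemma isCont_f_g: "isCont f1 x" "isCont f2 x" "isCont g1 x" "isCont g2 x"
  using has_derivative_continuous[OF grad1] has_derivative_continuous[OF grad2]
    lipschitz_on_continuous_on[OF lip1] lipschitz_on_continuous_on[OF lip2]
  by (simp_all add: continuous_on_eq_continuous_at)

lemma subseq_x1_x2_tendsto:
  assumes "strict_mono r" and "(\<lambda>j. x3 (r j)) \<longlonglongrightarrow> xs"
  shows "(\<lambda>j. x1 (r j)) \<longlonglongrightarrow> xs" "(\<lambda>j. x2 (r j)) \<longlonglongrightarrow> xs"
proof -
  have d: "(\<lambda>j. x3 (r j) - x1 (r j)) \<longlonglongrightarrow> 0" "(\<lambda>j. x3 (r j) - x2 (r j)) \<longlonglongrightarrow> 0"
    using LIMSEQ_subseq_LIMSEQ[OF x3_minus_x1_tendsto_zero assms(1)]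
      LIMSEQ_subseq_LIMSEQ[OF x3_minus_x2_tendsto_zero assms(1)]
    by (simp_all add: o_def)
  have "(\<lambda>j. x3 (r j) - (x3 (r j) - x1 (r j))) \<longlonglongrightarrow> xs - 0"
    "(\<lambda>j. x3 (r j) - (x3 (r j) - x2 (r j))) \<longlonglongrightarrow> xs - 0"
    by (intro tendsto_diff assms(2) d)+
  then show "(\<lambda>j. x1 (r j)) \<longlonglongrightarrow> xs" "(\<lambda>j. x2 (r j)) \<longlonglongrightarrow> xs"
    by simp_all
qed

lemma subseq_prox_residual_tendsto:
  assumes "strict_mono r" and "(\<lambda>j. x3 (r j)) \<longlonglongrightarrow> xs"
  shows "(\<lambda>j. (x1 (r j) - z1 (r j) + x2 (r j) - z2 (r j)) - x3 (r j)) \<longlonglongrightarrow> - \<gamma> *\<^sub>R (g1 xs + g2 xs)"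
proof -
  note x12 = subseq_x1_x2_tendsto[OF assms]
  have "x1 j - z1 j + x2 j - z2 j - x3 j
      = \<alpha> *\<^sub>R (x1 j - x3 j) + (1 - \<alpha>) *\<^sub>R (x2 j - x3 j) - \<gamma> *\<^sub>R (g1 (x1 j) + g2 (x2 j))" for j
    using prox_center_eq[of j] by (simp add: algebra_simps)
  moreover have "(\<lambda>j. \<alpha> *\<^sub>R (x1 (r j) - x3 (r j)) + (1 - \<alpha>) *\<^sub>R (x2 (r j) - x3 (r j))
      - \<gamma> *\<^sub>R (g1 (x1 (r j)) + g2 (x2 (r j))))
      \<longlonglongrightarrow> \<alpha> *\<^sub>R (xs - xs) + (1 - \<alpha>) *\<^sub>R (xs - xs) - \<gamma> *\<^sub>R (g1 xs + g2 xs)"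
    by (intro tendsto_intros x12 assms(2) isCont_tendsto_compose[OF isCont_f_g(3)]
        isCont_tendsto_compose[OF isCont_f_g(4)])
  ultimately show ?thesis
    by simp
qed

lemma subseq_f3_finite:
  assumes "strict_mono r" and "(\<lambda>j. x3 (r j)) \<longlonglongrightarrow> xs"
  shows "f3 xs \<noteq> \<infinity>"
proof -
  define H where "H j = env 0 - f1 (x3 (r j)) - f2 (x3 (r j))" for j
  have bound: "f3 (x3 k) \<le> ereal (env 0 - f1 (x3 k) - f2 (x3 k))" for k
  proof -
    have "f3 (x3 k) + ereal (f1 (x3 k) + f2 (x3 k)) \<le> ereal (env k)"
      using sum_le_model[of "x3 k" k] by (simp add: ereal_env add_left_mono)
    also have "\<dots> \<le> ereal (env 0)"
      using env_decseq by (simp add: decseq_def)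
    finally show ?thesis
      using f3_x3_finite[of k] by (cases "f3 (x3 k)") auto
  qed
  have "H \<longlonglongrightarrow> env 0 - f1 xs - f2 xs"
    unfolding H_def
    by (intro tendsto_intros isCont_tendsto_compose[OF isCont_f_g(1) assms(2)]
        isCont_tendsto_compose[OF isCont_f_g(2) assms(2)])
  then have "eventually (\<lambda>j. H j < env 0 - f1 xs - f2 xs + 1) sequentially"
    by (rule order_tendstoD) simp
  then have "eventually (\<lambda>j. f3 (x3 (r j)) \<le> ereal (env 0 - f1 xs - f2 xs + 1)) sequentially"
  proof (rule eventually_mono)
    fix j
    assume "H j < env 0 - f1 xs - f2 xs + 1"
    then show "f3 (x3 (r j)) \<le> ereal (env 0 - f1 xs - f2 xs + 1)"
      by (intro order_trans[OF bound[of "r j"]]) (simp add: H_def)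
  qed
  then have "f3 xs \<le> ereal (env 0 - f1 xs - f2 xs + 1)"
    by (rule lsc_fun_le_of_tendsto[OF lsc3 assms(2)])
  then show ?thesis
    by auto
qed

lemma subseq_f3_tendsto:
  assumes "strict_mono r" and "(\<lambda>j. x3 (r j)) \<longlonglongrightarrow> xs"
  shows "(\<lambda>j. f3 (x3 (r j))) \<longlonglongrightarrow> f3 xs"
  using stepsize_bounds(1) it3 assms(2) subseq_prox_residual_tendsto[OF assms]
    subseq_f3_finite[OF assms]
  by (rule tendsto_prox_value[OF proper3 lsc3])

lemma cluster_pts_x3E:
  assumes "xs \<in> cluster_pts x3"
  obtains r where "strict_mono r" "(\<lambda>j. x3 (r j)) \<longlonglongrightarrow> xs"
  using assms by (auto simp: cluster_pts_def o_def)

lemma env_tendsto_cluster_value: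
  assumes "xs \<in> cluster_pts x3"
  shows "(\<lambda>k. ereal (env k)) \<longlonglongrightarrow> ereal (f1 xs) + ereal (f2 xs) + f3 xs"
proof -
  obtain r where r: "strict_mono r" "(\<lambda>j. x3 (r j)) \<longlonglongrightarrow> xs"
    using assms by (rule cluster_pts_x3E)
  obtain l where l: "env \<longlonglongrightarrow> l"
    using env_convergent by (auto simp: convergent_def)
  note x12 = subseq_x1_x2_tendsto[OF r]
  have "(\<lambda>j. model (r j) (x3 (r j)))
      \<longlonglongrightarrow> f1 xs + (xs - xs) \<bullet> g1 xs + (norm (xs - xs))\<^sup>2 / (2 * (\<gamma> / \<alpha>))
        + (f2 xs + (xs - xs) \<bullet> g2 xs + (norm (xs - xs))\<^sup>2 / (2 * (\<gamma> / (1 - \<alpha>))))"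
    unfolding ryu_model_def quad_model_def
    by (intro tendsto_intros x12 r(2) isCont_tendsto_compose[OF isCont_f_g(1)]
        isCont_tendsto_compose[OF isCont_f_g(2)] isCont_tendsto_compose[OF isCont_f_g(3)]
        isCont_tendsto_compose[OF isCont_f_g(4)] | use stepsize_bounds(1) \<alpha> in simp)+
  then have "(\<lambda>j. model (r j) (x3 (r j))) \<longlonglongrightarrow> f1 xs + f2 xs"
    by simp
  moreover have "f3 xs \<noteq> -\<infinity>"
    using proper3 by (simp add: proper_fun_def)
  ultimately have "(\<lambda>j. ereal (env (r j))) \<longlonglongrightarrow> f3 xs + ereal (f1 xs + f2 xs)"
    unfolding ereal_env
    by (intro tendsto_add_ereal_general subseq_f3_tendsto[OF r] tendsto_ereal) auto
  moreover have "(\<lambda>j. ereal (env (r j))) \<longlonglongrightarrow> ereal l"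
    using LIMSEQ_subseq_LIMSEQ[OF l r(1)] by (simp add: o_def tendsto_ereal)
  ultimately have "ereal l = ereal (f1 xs) + ereal (f2 xs) + f3 xs"
    using LIMSEQ_unique by (metis add.commute plus_ereal.simps(1))
  then show ?thesis
    using tendsto_ereal[OF l] by metis
qed

lemma values_tendsto_cluster_value:
  assumes "bounded (range x1)" and "bounded (range x2)" and "xs \<in> cluster_pts x3"
  shows "(\<lambda>k. ereal (f1 (x1 k)) + ereal (f2 (x2 k)) + f3 (x3 k))
    \<longlonglongrightarrow> ereal (f1 xs) + ereal (f2 xs) + f3 xs"
proof -
  define d where "d k = model k (x3 k) - f1 (x1 k) - f2 (x2 k)" for k
  obtain l where l: "env \<longlonglongrightarrow> l"
    using env_convergent by (auto simp: convergent_def)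
  have "d = (\<lambda>k. (x3 k - x1 k) \<bullet> g1 (x1 k) + (norm (x3 k - x1 k))\<^sup>2 / (2 * (\<gamma> / \<alpha>))
      + ((x3 k - x2 k) \<bullet> g2 (x2 k) + (norm (x3 k - x2 k))\<^sup>2 / (2 * (\<gamma> / (1 - \<alpha>)))))"
    by (simp add: fun_eq_iff d_def ryu_model_def quad_model_def)
  moreover have "(\<lambda>k. (x3 k - x1 k) \<bullet> g1 (x1 k) + (norm (x3 k - x1 k))\<^sup>2 / (2 * (\<gamma> / \<alpha>))
      + ((x3 k - x2 k) \<bullet> g2 (x2 k) + (norm (x3 k - x2 k))\<^sup>2 / (2 * (\<gamma> / (1 - \<alpha>)))))
      \<longlonglongrightarrow> 0 + (norm (0::'a))\<^sup>2 / (2 * (\<gamma> / \<alpha>)) + (0 + (norm (0::'a))\<^sup>2 / (2 * (\<gamma> / (1 - \<alpha>))))"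
    using assms(1,2)
    by (intro tendsto_intros tendsto_inner_zero_bounded bounded_range_lipschitz_comp[OF lip1]
        bounded_range_lipschitz_comp[OF lip2] x3_minus_x1_tendsto_zero x3_minus_x2_tendsto_zero
        | use stepsize_bounds(1) \<alpha> in simp)+
  ultimately have "d \<longlonglongrightarrow> 0"
    by simp
  then have "(\<lambda>k. ereal (env k - d k)) \<longlonglongrightarrow> ereal (l - 0)"
    by (intro tendsto_intros l)
  moreover have "ereal (env k - d k) = ereal (f1 (x1 k)) + ereal (f2 (x2 k)) + f3 (x3 k)" for k
    using ereal_env[of k] f3_x3_finite[of k] by (cases "f3 (x3 k)") (auto simp: d_def)
  moreover have "ereal l = ereal (f1 xs) + ereal (f2 xs) + f3 xs"
    using env_tendsto_cluster_value[OF assms(3)] tendsto_ereal[OF l]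
    by (rule LIMSEQ_unique[symmetric])
  ultimately show ?thesis
    by simp
qed

lemma cluster_point_critical:
  assumes "xs \<in> cluster_pts x3"
  shows "- (g1 xs + g2 xs) \<in> limiting_subdiff f3 xs"
proof -
  obtain r where r: "strict_mono r" "(\<lambda>j. x3 (r j)) \<longlonglongrightarrow> xs"
    using assms by (rule cluster_pts_x3E)
  have "(\<lambda>j. (1 / \<gamma>) *\<^sub>R ((x1 (r j) - z1 (r j) + x2 (r j) - z2 (r j)) - x3 (r j)))
      \<longlonglongrightarrow> (1 / \<gamma>) *\<^sub>R (- \<gamma> *\<^sub>R (g1 xs + g2 xs))"
    by (intro tendsto_intros subseq_prox_residual_tendsto[OF r])
  then show ?thesis
    using stepsize_bounds(1) it3 r(2) subseq_f3_tendsto[OF r]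
    by (intro limiting_subdiff_of_prox[OF proper3]) auto
qed

end

lemma relaxation_lt_twice_alpha:
  fixes lam \<alpha> :: real
  assumes "0 < lam" and "lam < 2" and "(2 * lam - 3 + sqrt (9 - 4 * lam)) / 2 < \<alpha>"
  shows "lam < 2 * \<alpha>"
proof -
  have "(3 - lam)\<^sup>2 \<le> 9 - 4 * lam"
    using assms(1,2) mult_right_mono[of lam 2 lam] by (simp add: power2_eq_square algebra_simps)
  then have "3 - lam \<le> sqrt (9 - 4 * lam)"
    by (rule real_le_rsqrt)
  moreover have "2 * lam - 3 + sqrt (9 - 4 * lam) < 2 * \<alpha>"
    using assms(3) by simp
  ultimately show ?thesis
    by linarith
qed

lemma minimizer_real_lower_bound:
  fixes \<phi> :: "'a \<Rightarrow> ereal"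
  assumes "\<forall>y. \<phi> x \<le> \<phi> y" and "\<phi> x \<noteq> -\<infinity>" and "\<phi> w \<noteq> \<infinity>"
  shows "\<exists>m. \<forall>y. ereal m \<le> \<phi> y"
proof -
  have "\<phi> x \<noteq> \<infinity>"
    using assms(1,3) ereal_infty_less_eq(1) by metis
  with assms(1,2) show ?thesis
    by (cases "\<phi> x") auto
qed

theorem theorem2:
  fixes f1 f2 :: "'a::euclidean_space \<Rightarrow> real"
    and g1 g2 :: "'a \<Rightarrow> 'a"
    and f3 :: "'a \<Rightarrow> ereal"
    and L1 L2 lam \<alpha> \<gamma> \<epsilon>1 \<epsilon>2 :: real
    and x1 x2 x3 z1 z2 :: "nat \<Rightarrow> 'a"
  assumes cvx1: "convex_on UNIV f1" and cvx2: "convex_on UNIV f2"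
    and grad1: "\<And>x. (f1 has_derivative (\<lambda>h. g1 x \<bullet> h)) (at x)"
    and grad2: "\<And>x. (f2 has_derivative (\<lambda>h. g2 x \<bullet> h)) (at x)"
    and L1: "L1 > 0" and L2: "L2 > 0"
    and lip1: "L1-lipschitz_on UNIV g1" and lip2: "L2-lipschitz_on UNIV g2"
    and proper3: "proper_fun f3" and lsc3: "lsc_fun f3"
    and minimizer: "\<exists>x. \<forall>y. ereal (f1 x) + ereal (f2 x) + f3 x \<le> ereal (f1 y) + ereal (f2 y) + f3 y"
    and lam: "0 < lam" "lam < 2"
    and alpha: "(2 * lam - 3 + sqrt (9 - 4 * lam)) / 2 < \<alpha>" "\<alpha> < 1"
    and eps1: "\<alpha> / (2 * \<alpha> - lam) < \<epsilon>1" "\<epsilon>1 < (2 - lam) / (1 - \<alpha>)"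
    and eps2: "\<alpha> * L2 / lam < \<epsilon>2"
    and gam: "\<gamma> \<in> stepsize_set L1 L2 \<alpha> lam \<epsilon>1 \<epsilon>2"
    and gam2: "\<gamma> \<le> min (\<alpha> / L1) ((1 - \<alpha>) / L2)"
    and it1: "\<And>k. x1 k \<in> prox_set (\<lambda>x. ereal (f1 x)) \<gamma> (z1 k)"
    and it2: "\<And>k. x2 k \<in> prox_set (\<lambda>x. ereal (f2 x)) (\<gamma> / \<alpha>) (z2 k /\<^sub>R \<alpha> + x1 k)"
    and it3: "\<And>k. x3 k \<in> prox_set f3 \<gamma> (x1 k - z1 k + x2 k - z2 k)"
    and upd1: "\<And>k. z1 (Suc k) = z1 k + lam *\<^sub>R (x3 k - x1 k)"
    and upd2: "\<And>k. z2 (Suc k) = z2 k + lam *\<^sub>R (x3 k - x2 k)"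
  shows
   "((\<lambda>k. x1 (Suc k) - x1 k) \<longlonglongrightarrow> 0) \<and> ((\<lambda>k. x2 (Suc k) - x2 k) \<longlonglongrightarrow> 0)
    \<and> ((\<lambda>k. x3 (Suc k) - x3 k) \<longlonglongrightarrow> 0)
    \<and> ((\<lambda>k. z1 (Suc k) - z1 k) \<longlonglongrightarrow> 0) \<and> ((\<lambda>k. z2 (Suc k) - z2 k) \<longlonglongrightarrow> 0)
    \<and> ((\<lambda>k. x3 k - x1 k) \<longlonglongrightarrow> 0) \<and> ((\<lambda>k. x3 k - x2 k) \<longlonglongrightarrow> 0)
    \<and> (bounded (range x1) \<and> bounded (range x2) \<and> bounded (range x3)
        \<and> bounded (range z1) \<and> bounded (range z2) \<longrightarrow>
         (\<forall>xs \<in> cluster_pts x3.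
            ((\<lambda>k. ryu_env f1 g1 f2 g2 f3 \<gamma> \<alpha> (z1 k) (z2 k))
               \<longlonglongrightarrow> ereal (f1 xs) + ereal (f2 xs) + f3 xs)
          \<and> ((\<lambda>k. ereal (f1 (x1 k)) + ereal (f2 (x2 k)) + f3 (x3 k))
               \<longlonglongrightarrow> ereal (f1 xs) + ereal (f2 xs) + f3 xs))
       \<and> cluster_pts x1 = cluster_pts x3 \<and> cluster_pts x2 = cluster_pts x3
       \<and> (\<forall>xs \<in> cluster_pts x3. - (g1 xs + g2 xs) \<in> limiting_subdiff f3 xs))"
proof -
  have "lam < 2 * \<alpha>"
    using lam alpha(1) by (rule relaxation_lt_twice_alpha)
  then have "0 < \<alpha>" "0 < \<epsilon>1" "0 < \<epsilon>2"
    using lam L2 eps1(1) eps2 by (auto intro: less_trans[OF _ eps1(1)] less_trans[OF _ eps2])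
  moreover have "\<exists>m. \<forall>y. ereal m \<le> ereal (f1 y) + ereal (f2 y) + f3 y"
    using minimizer proper3 by (auto simp: proper_fun_def intro: minimizer_real_lower_bound)
  ultimately interpret relaxed_ryu f1 f2 g1 g2 f3 L1 L2 lam \<alpha> \<gamma> \<epsilon>1 \<epsilon>2 x1 x2 x3 z1 z2
    using assms by unfold_locales auto
  show ?thesis
    using x12_diff_tendsto_zero x3_diff_tendsto_zero z_diff_tendsto_zero x3_minus_x1_tendsto_zero
      x3_minus_x2_tendsto_zero cluster_pts_x1_x2 cluster_point_critical values_tendsto_cluster_value
      env_tendsto_cluster_value
    by (simp add: ryu_env_eq_env)
qed

end
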